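(* Let $N\geq 2$ and let $\sigma_1,\dots,\sigma_N:\mathbb{R}\to\mathbb{R}$ be functions admitting a Taylor decomposition on $\mathbb{R}$, i.e. $\sigma_i(x)=\sum_{t\ge0}\frac{\sigma_i^{(t)}(0)}{t!}x^t$ for all $x\in\mathbb{R}$. For $i=1,\dots,N$ define $f_i(x)=\sum_{t\geq 0}\frac{|\sigma_i^{(t)}(0)|}{t!}x^t$. Then the function on $\mathcal{I}\times\mathcal{I}$ $$K_N(\mathbf{X},\mathbf{X}'):=f_N\circ\cdots\circ f_2\Big(\sum_{i=1}^{n} f_1\big(\langle \mathbf{X}_i,\mathbf{X}'_i\rangle_{\mathbb{R}^{d}}\big)\Big)$$ is a positive (semi-)definite kernel on $\mathcal{I}$, and its RKHS $H_N$ contains $\mathcal{F}_{(\sigma_i)_{i=1}^N}$, the set of all functions computed by convolutional networks with activations $\sigma_1,\dots,\sigma_N$ (for every choice of numbers of filters and weights). Moreover, if $\sigma_i^{(t)}(0)\neq 0$ for all $i\in\{1,\dots,N\}$ and all $t\geq 0$, then $K_N$ is $c$-universal on $\mathcal{I}$, i.e. $K_N$ is continuous and $H_N$ is dense in $\mathcal{C}(\mathcal{I})$ for the uniform norm.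
   Context: Let $d\geq 2$, $n\geq 1$, $S^{d-1}\subset\mathbb{R}^d$ the unit sphere and $\mathcal{I}=(S^{d-1})^n$; write $\mathbf{X}=(\mathbf{X}_1,\dots,\mathbf{X}_n)\in\mathcal{I}$ with $\mathbf{X}_i\in S^{d-1}$ (normalized image patches). Convolutional network: fix $N\ge 2$, activations $\sigma_1,\dots,\sigma_N$, and integers $d_1=d$, $p_1=1$, $n_1=n$; for $k=2,\dots,N$ integers $p_k,d_k,n_k\geq1$; an integer $p_{N+1}\ge1$; and $d_{N+1}=n_N$, $n_{N+1}=1$, with $n_k+d_k-1\le n_{k-1}$ for $k=2,\dots,N+1$. Fix real pooling factors $(\gamma^k_{i,j})_{i,j=1}^{n_k}$ for $k=1,\dots,N$. Weights: $W^k\in\mathbb{R}^{p_{k+1}\times d_kp_k}$ with rows $w^k_1,\dots,w^k_{p_{k+1}}\in\mathbb{R}^{d_kp_k}$ for $k=1,\dots,N$, and $W^{N+1}\in\mathbb{R}^{d_{N+1}p_{N+1}}$. Given $\mathbf{X}^1\in\mathcal{I}$ (viewed as $n_1$ vectors $\mathbf{X}^1_q\in\mathbb{R}^{d_1p_1}$), define recursively for $k=1,\dots,N$: $Z^{k+1}(i,j)=\sum_{q=1}^{n_k}\gamma^k_{i,q}\,\sigma_k(\langle \mathbf{X}^k_q,w^k_j\rangle)$ for $i\le n_k$, $j\le p_{k+1}$; $U_i=(Z^{k+1}(i,1),\dots,Z^{k+1}(i,p_{k+1}))\in\mathbb{R}^{p_{k+1}}$; and $\mathbf{X}^{k+1}_q=(U_q,U_{q+1},\dots,U_{q+d_{k+1}-1})\in\mathbb{R}^{d_{k+1}p_{k+1}}$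 for $q=1,\dots,n_{k+1}$ (patch extraction). The network function is $\mathcal{N}_W(\mathbf{X}^1)=\langle \mathbf{X}^{N+1}_1,W^{N+1}\rangle$. $\mathcal{F}_{(\sigma_i)_{i=1}^N,(p_i)}$ is the set of all $\mathcal{N}_W$ over all weights, and $\mathcal{F}_{(\sigma_i)_{i=1}^N}$ is the union of these sets over all choices of the numbers of filters $p_2,\dots,p_{N+1}\ge1$ (the sizes $d_k,n_k$ and pooling factors being fixed arbitrarily). *)

theory Defs
  imports "HOL-Analysis.Analysis"
begin

text \<open>Points of the input space: an image X = (X_1,...,X_n) with X_q in S^(d-1) is
  encoded as X :: nat => nat => real, X q j being coordinate j (j < d) of patch q (q < n),
  zero-based, and extended by zero outside the index range.  The topology used is the
  product topology on functions, which on this set coincides with the Euclidean one.\<close>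

type_synonym image = "nat \<Rightarrow> nat \<Rightarrow> real"

definition sphere_images :: "nat \<Rightarrow> nat \<Rightarrow> image set" where
  "sphere_images d n = {X. (\<forall>q<n. (\<Sum>j<d. (X q j)\<^sup>2) = 1) \<and>
                            (\<forall>q j. (n \<le> q \<or> d \<le> j) \<longrightarrow> X q j = 0)}"

definition taylor_decomp :: "(real \<Rightarrow> real) \<Rightarrow> bool" where
  "taylor_decomp \<sigma> \<longleftrightarrow>
     (\<forall>t x. ((deriv ^^ t) \<sigma>) differentiable (at x)) \<and>
     (\<forall>x. (\<lambda>t. (deriv ^^ t) \<sigma> 0 / fact t * x ^ t) sums \<sigma> x)"

definition abs_series :: "(real \<Rightarrow> real) \<Rightarrow> real \<Rightarrow> real" where
  "abs_series \<sigma> x = (\<Sum>t. \<bar>(deriv ^^ t) \<sigma> 0\<bar> / fact t * x ^ t)"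

definition cnn_kernel ::
  "nat \<Rightarrow> nat \<Rightarrow> nat \<Rightarrow> (nat \<Rightarrow> real \<Rightarrow> real) \<Rightarrow> image \<Rightarrow> image \<Rightarrow> real" where
  "cnn_kernel d n N \<sigma> X X' =
     fold (\<lambda>i y. abs_series (\<sigma> i) y) [2..<Suc N]
       (\<Sum>i<n. abs_series (\<sigma> 1) (\<Sum>j<d. X i j * X' i j))"

definition psd_kernel :: "'a set \<Rightarrow> ('a \<Rightarrow> 'a \<Rightarrow> real) \<Rightarrow> bool" where
  "psd_kernel S K \<longleftrightarrow>
     (\<forall>x\<in>S. \<forall>y\<in>S. K x y = K y x) \<and>
     (\<forall>(m::nat) (a::nat \<Rightarrow> real) (x::nat \<Rightarrow> 'a). (\<forall>i<m. x i \<in> S) \<longrightarrow>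
        0 \<le> (\<Sum>i<m. \<Sum>j<m. a i * a j * K (x i) (x j)))"

text \<open>RKHS via the standard (Aronszajn) construction: elements of the pre-Hilbert space
  H_0 = span {K(x,.)} are represented by finite lists of (coefficient, point);
  H_K consists of the pointwise limits on S of H_0-Cauchy sequences.\<close>
definition h0_fun :: "('a \<Rightarrow> 'a \<Rightarrow> real) \<Rightarrow> (real \<times> 'a) list \<Rightarrow> 'a \<Rightarrow> real" where
  "h0_fun K r y = (\<Sum>(c, x)\<leftarrow>r. c * K x y)"

definition h0_sqnorm :: "('a \<Rightarrow> 'a \<Rightarrow> real) \<Rightarrow> (real \<times> 'a) list \<Rightarrow> real" where
  "h0_sqnorm K r = (\<Sum>(c, x)\<leftarrow>r. \<Sum>(c', x')\<leftarrow>r. c * c' * K x x')"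

definition h0_diff :: "(real \<times> 'a) list \<Rightarrow> (real \<times> 'a) list \<Rightarrow> (real \<times> 'a) list" where
  "h0_diff r r' = r @ map (\<lambda>(c, x). (- c, x)) r'"

definition rkhs :: "'a set \<Rightarrow> ('a \<Rightarrow> 'a \<Rightarrow> real) \<Rightarrow> ('a \<Rightarrow> real) set" where
  "rkhs S K = {f. \<exists>R :: nat \<Rightarrow> (real \<times> 'a) list.
      (\<forall>m. snd ` set (R m) \<subseteq> S) \<and>
      (\<forall>\<epsilon>>0. \<exists>M. \<forall>m\<ge>M. \<forall>m'\<ge>M. h0_sqnorm K (h0_diff (R m) (R m')) < \<epsilon>) \<and>
      (\<forall>x\<in>S. (\<lambda>m. h0_fun K (R m) x) \<longlonglongrightarrow> f x)}"

definition c_universal :: "('a::topological_space) set \<Rightarrow> ('a \<Rightarrow> 'a \<Rightarrow> real) \<Rightarrow> bool" where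
  "c_universal S K \<longleftrightarrow>
     continuous_on (S \<times> S) (\<lambda>(x, y). K x y) \<and>
     (\<forall>g. continuous_on S g \<longrightarrow>
        (\<forall>\<epsilon>>0. \<exists>h\<in>rkhs S K. \<forall>x\<in>S. \<bar>g x - h x\<bar> < \<epsilon>))"

text \<open>Convolutional networks (zero-based indices for patches/filters/coordinates, layer
  index k 1-based).  A layer representation X^k :: nat => nat => real, X^k q l being
  coordinate l (l < d_k p_k) of patch q (q < n_k).
  Z^{k+1}(i,j) = sum_{q<n_k} gamma^k_{i,q} sigma_k(<X^k_q, w^k_j>) and
  X^{k+1}_q = (U_q, ..., U_{q+d_{k+1}-1}), i.e. coordinate l of X^{k+1}_q is
  Z^{k+1}(q + l div p_{k+1}, l mod p_{k+1}).\<close>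
definition cnn_layer ::
  "(real \<Rightarrow> real) \<Rightarrow> (nat \<Rightarrow> nat \<Rightarrow> real) \<Rightarrow> (nat \<Rightarrow> nat \<Rightarrow> real) \<Rightarrow>
   nat \<Rightarrow> nat \<Rightarrow> nat \<Rightarrow> nat \<Rightarrow> image \<Rightarrow> image" where
  "cnn_layer \<sigma>k \<gamma>k Wk dk pk nk pk1 Xk =
     (\<lambda>q l. let Z = (\<lambda>i j. \<Sum>q'<nk. \<gamma>k i q' * \<sigma>k (\<Sum>m<dk * pk. Xk q' m * Wk j m))
            in Z (q + l div pk1) (l mod pk1))"

text \<open>cnn_state ... k X = X^{k+1}; parameters indexed by the layer k (1-based):
  sigma k, gamma k i j, W k j m (row j of W^k), dd k = d_k, p k = p_k, nn k = n_k.\<close>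
primrec cnn_state ::
  "(nat \<Rightarrow> real \<Rightarrow> real) \<Rightarrow> (nat \<Rightarrow> nat \<Rightarrow> nat \<Rightarrow> real) \<Rightarrow> (nat \<Rightarrow> nat \<Rightarrow> nat \<Rightarrow> real) \<Rightarrow>
   (nat \<Rightarrow> nat) \<Rightarrow> (nat \<Rightarrow> nat) \<Rightarrow> (nat \<Rightarrow> nat) \<Rightarrow> nat \<Rightarrow> image \<Rightarrow> image" where
  "cnn_state \<sigma> \<gamma> W dd p nn 0 X = X"
| "cnn_state \<sigma> \<gamma> W dd p nn (Suc k) X =
     cnn_layer (\<sigma> (Suc k)) (\<gamma> (Suc k)) (W (Suc k)) (dd (Suc k)) (p (Suc k)) (nn (Suc k))
       (p (Suc (Suc k))) (cnn_state \<sigma> \<gamma> W dd p nn k X)"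

definition cnn_net ::
  "nat \<Rightarrow> (nat \<Rightarrow> real \<Rightarrow> real) \<Rightarrow> (nat \<Rightarrow> nat \<Rightarrow> nat \<Rightarrow> real) \<Rightarrow> (nat \<Rightarrow> nat \<Rightarrow> nat \<Rightarrow> real) \<Rightarrow>
   (nat \<Rightarrow> real) \<Rightarrow> (nat \<Rightarrow> nat) \<Rightarrow> (nat \<Rightarrow> nat) \<Rightarrow> (nat \<Rightarrow> nat) \<Rightarrow> image \<Rightarrow> real" where
  "cnn_net N \<sigma> \<gamma> W Wout dd p nn X =
     (\<Sum>l<dd (Suc N) * p (Suc N). cnn_state \<sigma> \<gamma> W dd p nn N X 0 l * Wout l)"

definition cnn_sizes_ok :: "nat \<Rightarrow> nat \<Rightarrow> nat \<Rightarrow> (nat \<Rightarrow> nat) \<Rightarrow> (nat \<Rightarrow> nat) \<Rightarrow> bool" where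
  "cnn_sizes_ok d n N dd nn \<longleftrightarrow>
     dd 1 = d \<and> nn 1 = n \<and> dd (Suc N) = nn N \<and> nn (Suc N) = 1 \<and>
     (\<forall>k\<in>{2..N}. 1 \<le> dd k \<and> 1 \<le> nn k) \<and>
     (\<forall>k\<in>{2..Suc N}. nn k + dd k - 1 \<le> nn (k - 1))"

definition cnn_family ::
  "nat \<Rightarrow> (nat \<Rightarrow> real \<Rightarrow> real) \<Rightarrow> (nat \<Rightarrow> nat) \<Rightarrow> (nat \<Rightarrow> nat) \<Rightarrow>
   (nat \<Rightarrow> nat \<Rightarrow> nat \<Rightarrow> real) \<Rightarrow> (image \<Rightarrow> real) set" where
  "cnn_family N \<sigma> dd nn \<gamma> =
     {cnn_net N \<sigma> \<gamma> W Wout dd p nn | p W Wout.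
        p 1 = 1 \<and> (\<forall>k\<in>{2..Suc N}. 1 \<le> p k)}"

end

theory Submission
  imports Defs
begin

text \<open>Say that \<open>C \<cdot> K\<close> dominates \<open>g\<close> when \<open>C \<cdot> K - g \<otimes> g\<close> is a positive kernel;
  by Aronszajn's criterion this puts \<open>g\<close> in the RKHS of \<open>K\<close>. Domination survives sums and,
  by Schur's product theorem, products; passing to the limit in the partial sums, if
  \<open>C \<cdot> K\<close> dominates \<open>g\<close> then \<open>f(C) \<cdot> f \<circ> K\<close> dominates \<open>\<sigma> \<circ> g\<close>, where \<open>f\<close> is the series of the
  absolute Taylor coefficients of \<open>\<sigma>\<close>. Following a network layer by layer, \<open>K\<^sub>N\<close> thus
  dominates every neuron and hence every network function.

  For universality, the functions dominated by some power of the first-layer kernel form an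
  algebra containing the constants and the coordinates, hence are uniformly dense on the
  compact input space by Stone-Weierstrass. When no Taylor coefficient vanishes, \<open>K\<^sub>1\<^sup>s\<close> is
  dominated by a multiple of \<open>f\<^sub>2 \<circ> K\<^sub>1\<close>, and each \<open>K\<^sub>k\<close> by a multiple of \<open>K\<^sub>k\<^sub>+\<^sub>1\<close>, so the
  algebra lies in the RKHS of \<open>K\<^sub>N\<close>.\<close>

section \<open>Finite combinations and positive kernels\<close>

abbreviation points :: "(real \<times> 'a) list \<Rightarrow> 'a set" where
  "points r \<equiv> snd ` set r"

text \<open>A list \<open>[(c\<^sub>1, x\<^sub>1), \<dots>, (c\<^sub>m, x\<^sub>m)]\<close> stands for the combination
  \<open>\<Sum> c\<^sub>i K(x\<^sub>i, -)\<close>: \<open>gram K\<close> is the inner product of two combinations and \<open>pairing g\<close>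
  evaluates \<open>\<Sum> c\<^sub>i g(x\<^sub>i)\<close>.\<close>
definition gram :: "('a \<Rightarrow> 'a \<Rightarrow> real) \<Rightarrow> (real \<times> 'a) list \<Rightarrow> (real \<times> 'a) list \<Rightarrow> real" where
  "gram K r s = (\<Sum>p\<leftarrow>r. \<Sum>q\<leftarrow>s. fst p * fst q * K (snd p) (snd q))"

definition pairing :: "('a \<Rightarrow> real) \<Rightarrow> (real \<times> 'a) list \<Rightarrow> real" where
  "pairing g r = (\<Sum>p\<leftarrow>r. fst p * g (snd p))"

definition scale_comb :: "real \<Rightarrow> (real \<times> 'a) list \<Rightarrow> (real \<times> 'a) list" where
  "scale_comb c r = map (\<lambda>p. (c * fst p, snd p)) r"

definition weight_comb :: "('a \<Rightarrow> real) \<Rightarrow> (real \<times> 'a) list \<Rightarrow> (real \<times> 'a) list" where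
  "weight_comb u r = map (\<lambda>p. (fst p * u (snd p), snd p)) r"

lemma points_scale_comb [simp]: "points (scale_comb c r) = points r"
  and points_weight_comb [simp]: "points (weight_comb u r) = points r"
  by (auto simp: scale_comb_def weight_comb_def image_image)

lemma gram_Nil [simp]: "gram K [] s = 0" "gram K r [] = 0"
  by (simp_all add: gram_def)

lemma gram_Cons_left:
  "gram K (p # r) s = (\<Sum>q\<leftarrow>s. fst p * fst q * K (snd p) (snd q)) + gram K r s"
  by (simp add: gram_def)

lemma gram_Cons_right:
  "gram K r (q # s) = (\<Sum>p\<leftarrow>r. fst p * fst q * K (snd p) (snd q)) + gram K r s"
  by (simp add: gram_def sum_list_addf)

lemma gram_append_left: "gram K (r @ r') s = gram K r s + gram K r' s"
  by (simp add: gram_def)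

lemma gram_append_right: "gram K r (s @ s') = gram K r s + gram K r s'"
  by (simp add: gram_def sum_list_addf)

lemma gram_scale_comb_left: "gram K (scale_comb c r) s = c * gram K r s"
  by (simp add: gram_def scale_comb_def o_def sum_list_const_mult mult.assoc)

lemma gram_scale_comb_right: "gram K r (scale_comb c s) = c * gram K r s"
  by (simp add: gram_def scale_comb_def o_def sum_list_const_mult[symmetric] mult_ac)

lemma gram_weight_comb:
  "gram K (weight_comb u r) (weight_comb v s) = gram (\<lambda>x y. u x * K x y * v y) r s"
  by (simp add: gram_def weight_comb_def o_def mult_ac)

lemma gram_add_kernel: "gram (\<lambda>x y. K x y + L x y) r s = gram K r s + gram L r s"
  by (simp add: gram_def distrib_left sum_list_addf)

lemma gram_diff_kernel: "gram (\<lambda>x y. K x y - L x y) r s = gram K r s - gram L r s"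
  by (simp add: gram_def right_diff_distrib sum_list_subtractf)

lemma gram_cmult_kernel: "gram (\<lambda>x y. c * K x y) r s = c * gram K r s"
  by (simp add: gram_def sum_list_const_mult[symmetric] mult_ac)

lemma gram_sum_kernel: "gram (\<lambda>x y. \<Sum>t\<in>A. F t x y) r s = (\<Sum>t\<in>A. gram (F t) r s)"
  by (induction A rule: infinite_finite_induct) (simp_all add: gram_add_kernel, simp_all add: gram_def)

lemma gram_cong:
  "(\<And>x y. x \<in> points r \<Longrightarrow> y \<in> points s \<Longrightarrow> K x y = L x y) \<Longrightarrow> gram K r s = gram L r s"
  unfolding gram_def by (intro arg_cong[where f=sum_list] map_cong refl) auto

lemma gram_conv_nth:
  "gram K r s = (\<Sum>i<length r. \<Sum>j<length s. fst (r!i) * fst (s!j) * K (snd (r!i)) (snd (s!j)))"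
  unfolding gram_def by (simp add: sum_list_sum_nth atLeast0LessThan)

lemma pairing_append: "pairing g (r @ s) = pairing g r + pairing g s"
  by (simp add: pairing_def)

lemma pairing_scale_comb: "pairing g (scale_comb c r) = c * pairing g r"
  by (simp add: pairing_def scale_comb_def o_def sum_list_const_mult mult.assoc)

lemma pairing_add: "pairing (\<lambda>x. g x + h x) r = pairing g r + pairing h r"
  by (simp add: pairing_def distrib_left sum_list_addf)

lemma pairing_cmult: "pairing (\<lambda>x. c * g x) r = c * pairing g r"
  by (simp add: pairing_def sum_list_const_mult[symmetric] mult_ac)

lemma pairing_sum: "pairing (\<lambda>x. \<Sum>t\<in>A. F t x) r = (\<Sum>t\<in>A. pairing (F t) r)"
  by (induction A rule: infinite_finite_induct) (simp_all add: pairing_add, simp_all add: pairing_def)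

lemma gram_prod: "gram (\<lambda>x y. g x * h y) r s = pairing g r * pairing h s"
proof -
  have "gram (\<lambda>x y. g x * h y) r s = (\<Sum>p\<leftarrow>r. (fst p * g (snd p)) * pairing h s)"
    unfolding gram_def pairing_def
    by (intro arg_cong[where f=sum_list] map_cong refl)
      (simp add: sum_list_const_mult[symmetric] mult_ac)
  also have "\<dots> = pairing g r * pairing h s"
    unfolding pairing_def by (simp add: sum_list_mult_const)
  finally show ?thesis .
qed

lemma gram_single_right: "gram K s [(c, x)] = c * pairing (\<lambda>y. K y x) s"
  by (simp add: gram_def pairing_def sum_list_const_mult[symmetric] mult_ac)

lemma gram_commute:
  assumes "\<And>x y. x \<in> points r \<Longrightarrow> y \<in> points s \<Longrightarrow> K x y = K y x"
  shows "gram K r s = gram K s r"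
proof -
  have "gram K r s = (\<Sum>q\<leftarrow>s. \<Sum>p\<leftarrow>r. fst p * fst q * K (snd p) (snd q))"
    unfolding gram_def by (induction r) (simp_all add: sum_list_addf)
  also have "\<dots> = gram K s r"
    unfolding gram_def using assms
    by (intro arg_cong[where f=sum_list] map_cong refl) (auto simp: mult_ac)
  finally show ?thesis .
qed

lemma psd_kernel_iff_gram:
  "psd_kernel S K \<longleftrightarrow>
     (\<forall>x\<in>S. \<forall>y\<in>S. K x y = K y x) \<and> (\<forall>r. points r \<subseteq> S \<longrightarrow> 0 \<le> gram K r r)"
proof -
  have "(\<forall>(m::nat) a x. (\<forall>i<m. x i \<in> S) \<longrightarrow> 0 \<le> (\<Sum>i<m. \<Sum>j<m. a i * a j * K (x i) (x j)))
        \<longleftrightarrow> (\<forall>r. points r \<subseteq> S \<longrightarrow> 0 \<le> gram K r r)" (is "?idx \<longleftrightarrow> ?comb")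
  proof
    assume ?idx
    show ?comb
    proof (intro allI impI)
      fix r :: "(real \<times> _) list" assume "points r \<subseteq> S"
      then have "\<forall>i<length r. snd (r!i) \<in> S" by auto
      with \<open>?idx\<close>[rule_format, where m="length r" and a="\<lambda>i. fst (r!i)" and x="\<lambda>i. snd (r!i)"]
      show "0 \<le> gram K r r"
        unfolding gram_conv_nth by blast
    qed
  next
    assume ?comb
    show ?idx
    proof (intro allI impI)
      fix m :: nat and a x assume "\<forall>i<m. x i \<in> S"
      then have "points (map (\<lambda>i. (a i, x i)) [0..<m]) \<subseteq> S" by auto
      with \<open>?comb\<close> show "0 \<le> (\<Sum>i<m. \<Sum>j<m. a i * a j * K (x i) (x j))"
        unfolding gram_conv_nth by fastforce
    qed
  qed
  then show ?thesis by (simp add: psd_kernel_def)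
qed

lemma psd_kernelI:
  "(\<And>x y. x \<in> S \<Longrightarrow> y \<in> S \<Longrightarrow> K x y = K y x) \<Longrightarrow>
   (\<And>r. points r \<subseteq> S \<Longrightarrow> 0 \<le> gram K r r) \<Longrightarrow> psd_kernel S K"
  by (simp add: psd_kernel_iff_gram)

lemma psd_kernel_commute: "psd_kernel S K \<Longrightarrow> x \<in> S \<Longrightarrow> y \<in> S \<Longrightarrow> K x y = K y x"
  by (simp add: psd_kernel_def)

lemma psd_kernel_gram_nonneg: "psd_kernel S K \<Longrightarrow> points r \<subseteq> S \<Longrightarrow> 0 \<le> gram K r r"
  by (simp add: psd_kernel_iff_gram)

lemma psd_kernel_gram_commute:
  "psd_kernel S K \<Longrightarrow> points r \<subseteq> S \<Longrightarrow> points s \<subseteq> S \<Longrightarrow> gram K r s = gram K s r"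
  by (rule gram_commute) (auto simp: psd_kernel_def)

lemma psd_kernel_add: "psd_kernel S K \<Longrightarrow> psd_kernel S L \<Longrightarrow> psd_kernel S (\<lambda>x y. K x y + L x y)"
  by (simp add: psd_kernel_iff_gram gram_add_kernel)

lemma psd_kernel_cmult: "0 \<le> c \<Longrightarrow> psd_kernel S K \<Longrightarrow> psd_kernel S (\<lambda>x y. c * K x y)"
  by (simp add: psd_kernel_iff_gram gram_cmult_kernel)

lemma psd_kernel_sum:
  "(\<And>t. t \<in> A \<Longrightarrow> psd_kernel S (F t)) \<Longrightarrow> psd_kernel S (\<lambda>x y. \<Sum>t\<in>A. F t x y)"
  by (simp add: psd_kernel_iff_gram gram_sum_kernel sum_nonneg)

lemma psd_kernel_prod: "psd_kernel S (\<lambda>x y. g x * g y)"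
  by (simp add: psd_kernel_iff_gram gram_prod)

lemma psd_kernel_diag_nonneg: "psd_kernel S B \<Longrightarrow> x \<in> S \<Longrightarrow> 0 \<le> B x x"
  using psd_kernel_gram_nonneg[of S B "[(1, x)]"] by (simp add: gram_def)

lemma psd_kernel_diag_zero:
  assumes B: "psd_kernel S B" and "x \<in> S" "y \<in> S" "B x x = 0"
  shows "B y x = 0"
proof (rule ccontr)
  assume ne: "B y x \<noteq> 0"
  define t where "t = - (B y y + 1) / (2 * B y x)"
  have "0 \<le> gram B [(1, y), (t, x)] [(1, y), (t, x)]"
    using assms by (intro psd_kernel_gram_nonneg) auto
  also have "\<dots> = B y y + 2 * t * B y x"
    using assms psd_kernel_commute[OF B \<open>x \<in> S\<close> \<open>y \<in> S\<close>] by (simp add: gram_def algebra_simps)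
  also have "\<dots> = -1"
    using ne by (simp add: t_def field_simps)
  finally show False by simp
qed

lemma psd_kernel_schur_complement:
  assumes B: "psd_kernel S B" and x: "x \<in> S" and b: "0 < B x x"
  shows "psd_kernel S (\<lambda>y z. B y z - inverse (B x x) * (B y x * B z x))"
proof (rule psd_kernelI)
  show "B y z - inverse (B x x) * (B y x * B z x) = B z y - inverse (B x x) * (B z x * B y x)"
    if "y \<in> S" "z \<in> S" for y z
    using psd_kernel_commute[OF B that] by simp
  fix r assume r: "points r \<subseteq> S"
  define \<beta> where "\<beta> = pairing (\<lambda>y. B y x) r"
  define t where "t = - \<beta> / B x x"
  have "0 \<le> gram B (r @ [(t, x)]) (r @ [(t, x)])"
    using B r x by (intro psd_kernel_gram_nonneg) auto
  also have "\<dots> = gram B r r + 2 * t * \<beta> + t * t * B x x"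
  proof -
    have "gram B [(t, x)] r = gram B r [(t, x)]"
      using psd_kernel_gram_commute[OF B, of "[(t, x)]" r] r x by simp
    moreover have "gram B r [(t, x)] = t * \<beta>"
      by (simp add: gram_single_right \<beta>_def)
    moreover have "gram B [(t, x)] [(t, x)] = t * t * B x x"
      by (simp add: gram_def)
    ultimately show ?thesis
      by (simp add: gram_append_left gram_append_right)
  qed
  also have "\<dots> = gram B r r - inverse (B x x) * (\<beta> * \<beta>)"
    using b by (simp add: t_def field_simps)
  finally show "0 \<le> gram (\<lambda>y z. B y z - inverse (B x x) * (B y x * B z x)) r r"
    by (simp add: gram_diff_kernel gram_cmult_kernel gram_prod \<beta>_def)
qed

text \<open>Pivoting on \<open>x\<close> leaves a positive kernel that vanishes on the row and the column
  of \<open>x\<close>.\<close>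
lemma psd_kernel_deflate:
  assumes B: "psd_kernel S B" and x: "x \<in> S"
  obtains u where "psd_kernel S (\<lambda>y z. B y z - u y * u z)" "\<And>y. y \<in> S \<Longrightarrow> B y x = u y * u x"
proof (cases "B x x = 0")
  case True
  then show ?thesis
    using that[of "\<lambda>_. 0"] B psd_kernel_diag_zero[OF B x] by simp
next
  case False
  with psd_kernel_diag_nonneg[OF B x] have b: "0 < B x x" by simp
  define u where "u y = B y x / sqrt (B x x)" for y
  have prod: "u y * u z = inverse (B x x) * (B y x * B z x)" for y z
    using b by (simp add: u_def field_simps)
  have "psd_kernel S (\<lambda>y z. B y z - u y * u z)"
    unfolding prod by (rule psd_kernel_schur_complement[OF B x b])
  moreover have "B y x = u y * u x" for y
    using b by (simp add: prod)
  ultimately show ?thesis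
    by (rule that)
qed

lemma gram_Cons_vanishing:
  assumes "\<And>y. y \<in> points (p # r) \<Longrightarrow> M (snd p) y = 0 \<and> M y (snd p) = 0"
  shows "gram M (p # r) (p # r) = gram M r r"
proof -
  have "(\<Sum>q\<leftarrow>p # r. fst p * fst q * M (snd p) (snd q)) = 0"
    "(\<Sum>q\<leftarrow>r. fst q * fst p * M (snd q) (snd p)) = 0"
    using assms by (simp_all cong: map_cong)
  then show ?thesis
    by (simp only: gram_Cons_left[of _ p r] gram_Cons_right[of _ r p r])
qed

theorem psd_kernel_mult:
  assumes A: "psd_kernel S A" and B: "psd_kernel S B"
  shows "psd_kernel S (\<lambda>x y. A x y * B x y)"
proof (rule psd_kernelI)
  show "A x y * B x y = A y x * B y x" if "x \<in> S" "y \<in> S" for x y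
    using psd_kernel_commute[OF A that] psd_kernel_commute[OF B that] by simp
  fix r assume "points r \<subseteq> S"
  then show "0 \<le> gram (\<lambda>x y. A x y * B x y) r r"
    using B
  proof (induction r arbitrary: B)
    case Nil
    then show ?case by simp
  next
    case (Cons p r)
    obtain u where B': "psd_kernel S (\<lambda>y z. B y z - u y * u z)"
      and col: "\<And>y. y \<in> S \<Longrightarrow> B y (snd p) = u y * u (snd p)"
      using psd_kernel_deflate[OF Cons.prems(2)] Cons.prems(1) by auto
    have "gram (\<lambda>x y. A x y * B x y) (p # r) (p # r)
        = gram (\<lambda>x y. A x y * (B x y - u x * u y)) (p # r) (p # r)
          + gram A (weight_comb u (p # r)) (weight_comb u (p # r))"
      unfolding gram_weight_comb gram_add_kernel[symmetric]
      by (rule gram_cong) (simp add: algebra_simps)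
    also have "gram (\<lambda>x y. A x y * (B x y - u x * u y)) (p # r) (p # r)
        = gram (\<lambda>x y. A x y * (B x y - u x * u y)) r r"
      using Cons.prems col psd_kernel_commute[OF Cons.prems(2)]
      by (intro gram_Cons_vanishing) (auto simp: mult.commute)
    finally show ?case
      using Cons.IH[OF _ B'] Cons.prems(1) psd_kernel_gram_nonneg[OF A, of "weight_comb u (p # r)"]
      by simp
  qed
qed

lemma psd_kernel_pow: "psd_kernel S K \<Longrightarrow> psd_kernel S (\<lambda>x y. K x y ^ n)"
  using psd_kernel_prod[of S "\<lambda>_. 1"]
  by (induction n) (simp_all add: psd_kernel_mult)

section \<open>Domination by a kernel\<close>

definition dominated :: "'a set \<Rightarrow> ('a \<Rightarrow> 'a \<Rightarrow> real) \<Rightarrow> ('a \<Rightarrow> real) \<Rightarrow> real \<Rightarrow> bool" where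
  "dominated S K g C \<longleftrightarrow>
     0 \<le> C \<and> psd_kernel S K \<and> psd_kernel S (\<lambda>x y. C * K x y - g x * g y)"

lemma dominated_iff_pairing:
  "dominated S K g C \<longleftrightarrow>
     0 \<le> C \<and> psd_kernel S K \<and> (\<forall>r. points r \<subseteq> S \<longrightarrow> (pairing g r)\<^sup>2 \<le> C * gram K r r)"
proof -
  have "psd_kernel S (\<lambda>x y. C * K x y - g x * g y) \<longleftrightarrow>
        (\<forall>r. points r \<subseteq> S \<longrightarrow> (pairing g r)\<^sup>2 \<le> C * gram K r r)" if "psd_kernel S K"
    using psd_kernel_commute[OF that]
    by (auto simp: psd_kernel_iff_gram gram_diff_kernel gram_cmult_kernel gram_prod
        power2_eq_square mult.commute)
  then show ?thesis unfolding dominated_def by blast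
qed

lemma dominatedI:
  "0 \<le> C \<Longrightarrow> psd_kernel S K \<Longrightarrow>
   (\<And>r. points r \<subseteq> S \<Longrightarrow> (pairing g r)\<^sup>2 \<le> C * gram K r r) \<Longrightarrow> dominated S K g C"
  by (simp add: dominated_iff_pairing)

lemma dominated_nonneg: "dominated S K g C \<Longrightarrow> 0 \<le> C"
  and dominated_psd_kernel: "dominated S K g C \<Longrightarrow> psd_kernel S K"
  and dominated_pairing_le:
    "dominated S K g C \<Longrightarrow> points r \<subseteq> S \<Longrightarrow> (pairing g r)\<^sup>2 \<le> C * gram K r r"
  by (simp_all add: dominated_iff_pairing)

lemma dominated_zero: "psd_kernel S K \<Longrightarrow> dominated S K (\<lambda>_. 0) 0"
  by (simp add: dominated_iff_pairing pairing_def)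

lemma dominated_one: "dominated S (\<lambda>_ _. 1) (\<lambda>_. 1) 1"
  using psd_kernel_prod[of S "\<lambda>_. 1"] psd_kernel_cmult[of 0] by (simp add: dominated_def)

lemma dominated_self_prod: "dominated S (\<lambda>x y. g x * g y) g 1"
  using psd_kernel_prod[of S g] psd_kernel_cmult[of 0] by (simp add: dominated_def)

lemma dominated_mono:
  assumes g: "dominated S K g C" and KL: "psd_kernel S (\<lambda>x y. L x y - K x y)"
  shows "dominated S L g C"
proof -
  have "psd_kernel S (\<lambda>x y. (C * K x y - g x * g y) + C * (L x y - K x y))"
    using g KL by (intro psd_kernel_add psd_kernel_cmult) (auto simp: dominated_def)
  moreover have "psd_kernel S (\<lambda>x y. K x y + (L x y - K x y))"
    using g KL by (intro psd_kernel_add) (auto simp: dominated_def)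
  ultimately show ?thesis
    using g by (simp add: dominated_def algebra_simps)
qed

lemma dominated_scale_kernel:
  assumes "dominated S K g C" "0 < b"
  shows "dominated S (\<lambda>x y. b * K x y) g (C / b)"
  using assms psd_kernel_cmult[of b S K] by (simp add: dominated_def)

lemma dominated_smult:
  assumes "dominated S K g C"
  shows "dominated S K (\<lambda>x. c * g x) (c\<^sup>2 * C)"
proof -
  have "psd_kernel S (\<lambda>x y. c\<^sup>2 * (C * K x y - g x * g y))"
    using assms by (intro psd_kernel_cmult) (auto simp: dominated_def)
  then show ?thesis
    using assms by (simp add: dominated_def algebra_simps power2_eq_square)
qed

lemma sq_add_le_mult_add:
  fixes L1 L2 C D Q1 Q2 :: real
  assumes "L1\<^sup>2 \<le> C * Q1" "L2\<^sup>2 \<le> D * Q2" "0 \<le> C" "0 \<le> D" "0 \<le> Q1" "0 \<le> Q2"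
  shows "(L1 + L2)\<^sup>2 \<le> (C + D) * (Q1 + Q2)"
proof -
  have "\<bar>L1 * L2\<bar> = sqrt (L1\<^sup>2 * L2\<^sup>2)"
    by (simp add: real_sqrt_mult abs_mult)
  also have "\<dots> \<le> sqrt ((C * Q2) * (D * Q1))"
  proof (rule real_sqrt_le_mono)
    have "L1\<^sup>2 * L2\<^sup>2 \<le> (C * Q1) * (D * Q2)"
      by (rule mult_mono) (use assms in simp_all)
    then show "L1\<^sup>2 * L2\<^sup>2 \<le> (C * Q2) * (D * Q1)"
      by (simp add: mult_ac)
  qed
  also have "\<dots> \<le> (C * Q2 + D * Q1) / 2"
    using assms by (intro arith_geo_mean_sqrt) simp_all
  finally have "L1 * L2 \<le> (C * Q2 + D * Q1) / 2"
    by (rule order_trans[OF abs_ge_self])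
  with assms(1,2) show ?thesis
    by (simp add: power2_sum algebra_simps)
qed

lemma dominated_add_kernel:
  assumes g: "dominated S K g C" and h: "dominated S L h D"
  shows "dominated S (\<lambda>x y. K x y + L x y) (\<lambda>x. g x + h x) (C + D)"
proof (rule dominatedI)
  show "0 \<le> C + D"
    using g h by (simp add: dominated_nonneg)
  show "psd_kernel S (\<lambda>x y. K x y + L x y)"
    using g h by (intro psd_kernel_add dominated_psd_kernel)
  fix r assume r: "points r \<subseteq> S"
  show "(pairing (\<lambda>x. g x + h x) r)\<^sup>2 \<le> (C + D) * gram (\<lambda>x y. K x y + L x y) r r"
    unfolding pairing_add gram_add_kernel
    using g h r
    by (intro sq_add_le_mult_add dominated_pairing_le dominated_nonneg
        psd_kernel_gram_nonneg[OF dominated_psd_kernel])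
qed

lemma dominated_add:
  assumes "dominated S K g C" "dominated S K h D"
  shows "dominated S K (\<lambda>x. g x + h x) (2 * C + 2 * D)"
  using dominated_scale_kernel[OF dominated_add_kernel[OF assms], of "1 / 2"]
  by (simp add: field_simps)

lemma dominated_sum:
  assumes "finite A" "\<And>t. t \<in> A \<Longrightarrow> dominated S (F t) (G t) (C t)"
  shows "dominated S (\<lambda>x y. \<Sum>t\<in>A. F t x y) (\<lambda>x. \<Sum>t\<in>A. G t x) (\<Sum>t\<in>A. C t)"
  using assms
proof (induction A rule: finite_induct)
  case empty
  then show ?case
    using dominated_zero[OF psd_kernel_sum[of "{}"]] by simp
next
  case (insert t A)
  then show ?case
    using dominated_add_kernel[of S "F t" "G t" "C t"] by simp
qed

text \<open>\<open>C D \<cdot> K L - (g h) \<otimes> (g h) = (C K - g \<otimes> g)(D L) + (g \<otimes> g)(D L - h \<otimes> h)\<close>,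
  a sum of Schur products of positive kernels.\<close>
lemma dominated_mult:
  assumes g: "dominated S K g C" and h: "dominated S L h D"
  shows "dominated S (\<lambda>x y. K x y * L x y) (\<lambda>x. g x * h x) (C * D)"
proof -
  have "psd_kernel S (\<lambda>x y. (C * K x y - g x * g y) * (D * L x y)
                            + (g x * g y) * (D * L x y - h x * h y))"
    using g h
    by (intro psd_kernel_add psd_kernel_mult psd_kernel_cmult psd_kernel_prod)
      (auto simp: dominated_def)
  then show ?thesis
    using g h by (simp add: dominated_def psd_kernel_mult algebra_simps)
qed

lemma dominated_pow: "dominated S K g C \<Longrightarrow> dominated S (\<lambda>x y. K x y ^ n) (\<lambda>x. g x ^ n) (C ^ n)"
  by (induction n) (simp_all add: dominated_one dominated_mult)

definition dominable :: "'a set \<Rightarrow> ('a \<Rightarrow> 'a \<Rightarrow> real) \<Rightarrow> ('a \<Rightarrow> real) \<Rightarrow> bool" where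
  "dominable S K g \<longleftrightarrow> (\<exists>C. dominated S K g C)"

lemma dominable_psd_kernel: "dominable S K g \<Longrightarrow> psd_kernel S K"
  by (auto simp: dominable_def dominated_psd_kernel)

lemma dominable_smult: "dominable S K g \<Longrightarrow> dominable S K (\<lambda>x. c * g x)"
  by (auto simp: dominable_def intro: dominated_smult)

lemma dominable_add: "dominable S K g \<Longrightarrow> dominable S K h \<Longrightarrow> dominable S K (\<lambda>x. g x + h x)"
  by (auto simp: dominable_def intro: dominated_add)

lemma dominable_sum:
  assumes "psd_kernel S K" "\<And>t. t \<in> A \<Longrightarrow> dominable S K (G t)"
  shows "dominable S K (\<lambda>x. \<Sum>t\<in>A. G t x)"
  using assms(2)
proof (induction A rule: infinite_finite_induct)
  case (insert t A)
  then show ?case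
    by (simp add: dominable_add)
qed (use dominated_zero[OF assms(1)] in \<open>auto simp: dominable_def\<close>)

section \<open>Entire series with absolute coefficients\<close>

definition taylor_coeff :: "(real \<Rightarrow> real) \<Rightarrow> nat \<Rightarrow> real" where
  "taylor_coeff \<sigma> t = (deriv ^^ t) \<sigma> 0 / fact t"

lemma taylor_coeff_sums: "taylor_decomp \<sigma> \<Longrightarrow> (\<lambda>t. taylor_coeff \<sigma> t * x ^ t) sums \<sigma> x"
  by (simp add: taylor_decomp_def taylor_coeff_def)

lemma abs_series_eq: "abs_series \<sigma> x = (\<Sum>t. \<bar>taylor_coeff \<sigma> t\<bar> * x ^ t)"
  by (simp add: abs_series_def taylor_coeff_def)

lemma abs_series_sums:
  assumes "taylor_decomp \<sigma>"
  shows "(\<lambda>t. \<bar>taylor_coeff \<sigma> t\<bar> * x ^ t) sums abs_series \<sigma> x"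
proof -
  have "summable (\<lambda>t. taylor_coeff \<sigma> t * (\<bar>x\<bar> + 1) ^ t)"
    using taylor_coeff_sums[OF assms] sums_summable by blast
  then have "summable (\<lambda>t. norm (taylor_coeff \<sigma> t * x ^ t))"
    by (rule powser_insidea) simp
  then have "summable (\<lambda>t. \<bar>taylor_coeff \<sigma> t\<bar> * x ^ t)"
    by (rule summable_comparison_test') (simp add: abs_mult power_abs)
  then show ?thesis
    by (simp add: abs_series_def taylor_coeff_def summable_sums)
qed

lemma abs_series_nonneg: "taylor_decomp \<sigma> \<Longrightarrow> 0 \<le> x \<Longrightarrow> 0 \<le> abs_series \<sigma> x"
  using sums_le[OF _ sums_zero abs_series_sums] by simp

lemma sum_lessThan_le_sums: "f sums s \<Longrightarrow> (\<And>n. 0 \<le> f n) \<Longrightarrow> (\<Sum>n<T. f n) \<le> (s :: real)"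
  using sum_le_suminf[of f "{..<T}"] by (simp add: sums_iff)

lemma sums_sum_list:
  fixes f :: "nat \<Rightarrow> 'a \<Rightarrow> real"
  shows "(\<And>p. p \<in> set xs \<Longrightarrow> (\<lambda>t. f t p) sums g p) \<Longrightarrow>
         (\<lambda>t. \<Sum>p\<leftarrow>xs. f t p) sums (\<Sum>p\<leftarrow>xs. g p)"
  by (induction xs) (simp_all add: sums_add)

lemma gram_sums:
  "(\<And>x y. x \<in> points r \<Longrightarrow> y \<in> points s \<Longrightarrow> (\<lambda>t. F t x y) sums G x y) \<Longrightarrow>
   (\<lambda>t. gram (F t) r s) sums gram G r s"
  unfolding gram_def by (intro sums_sum_list sums_mult) auto

lemma pairing_sums:
  "(\<And>x. x \<in> points r \<Longrightarrow> (\<lambda>t. F t x) sums G x) \<Longrightarrow> (\<lambda>t. pairing (F t) r) sums pairing G r"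
  unfolding pairing_def by (intro sums_sum_list sums_mult) auto

lemma gram_abs_series_sums:
  assumes "taylor_decomp \<tau>"
  shows "(\<lambda>t. \<bar>taylor_coeff \<tau> t\<bar> * gram (\<lambda>x y. K x y ^ t) r s)
           sums gram (\<lambda>x y. abs_series \<tau> (K x y)) r s"
  unfolding gram_cmult_kernel[symmetric] by (rule gram_sums) (rule abs_series_sums[OF assms])

lemma psd_kernel_abs_series_minus_term:
  assumes \<tau>: "taylor_decomp \<tau>" and L: "psd_kernel S L"
  shows "psd_kernel S (\<lambda>x y. abs_series \<tau> (L x y) - \<bar>taylor_coeff \<tau> s\<bar> * L x y ^ s)"
proof (rule psd_kernelI)
  show "abs_series \<tau> (L x y) - \<bar>taylor_coeff \<tau> s\<bar> * L x y ^ s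
      = abs_series \<tau> (L y x) - \<bar>taylor_coeff \<tau> s\<bar> * L y x ^ s" if "x \<in> S" "y \<in> S" for x y
    using psd_kernel_commute[OF L that] by simp
  fix r assume r: "points r \<subseteq> S"
  define c where "c t = \<bar>taylor_coeff \<tau> t\<bar> * gram (\<lambda>x y. L x y ^ t) r r" for t
  have "0 \<le> c t - (if t = s then c t else 0)" for t
    using psd_kernel_gram_nonneg[OF psd_kernel_pow[OF L] r] by (simp add: c_def)
  moreover have "(\<lambda>t. c t - (if t = s then c t else 0)) sums (gram (\<lambda>x y. abs_series \<tau> (L x y)) r r - c s)"
    unfolding c_def by (intro sums_diff gram_abs_series_sums[OF \<tau>] sums_single)
  ultimately have "0 \<le> gram (\<lambda>x y. abs_series \<tau> (L x y)) r r - c s"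
    by (rule sums_le[OF _ sums_zero])
  then show "0 \<le> gram (\<lambda>x y. abs_series \<tau> (L x y) - \<bar>taylor_coeff \<tau> s\<bar> * L x y ^ s) r r"
    by (simp add: c_def gram_diff_kernel gram_cmult_kernel)
qed

lemma psd_kernel_abs_series:
  assumes "taylor_decomp \<tau>" "psd_kernel S L"
  shows "psd_kernel S (\<lambda>x y. abs_series \<tau> (L x y))"
proof -
  have "psd_kernel S (\<lambda>x y. (abs_series \<tau> (L x y) - \<bar>taylor_coeff \<tau> 0\<bar> * L x y ^ 0)
                            + \<bar>taylor_coeff \<tau> 0\<bar> * L x y ^ 0)"
    by (rule psd_kernel_add[OF psd_kernel_abs_series_minus_term[OF assms]
          psd_kernel_cmult[OF abs_ge_zero psd_kernel_pow[OF assms(2)]]])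
  then show ?thesis
    by simp
qed

lemma dominated_abs_smult:
  assumes "dominated S K g C"
  shows "dominated S (\<lambda>x y. \<bar>c\<bar> * K x y) (\<lambda>x. c * g x) (\<bar>c\<bar> * C)"
proof -
  have "\<bar>c\<bar> * C * (\<bar>c\<bar> * K x y) - c * g x * (c * g y) = c\<^sup>2 * (C * K x y - g x * g y)" for x y
    by (cases "0 \<le> c") (simp_all add: power2_eq_square algebra_simps)
  moreover have "psd_kernel S (\<lambda>x y. c\<^sup>2 * (C * K x y - g x * g y))"
    using assms by (intro psd_kernel_cmult) (auto simp: dominated_def)
  ultimately show ?thesis
    using assms psd_kernel_cmult[of "\<bar>c\<bar>" S K] by (simp add: dominated_def)
qed

lemma dominated_abs_partial_sum:
  assumes "dominated S K g C"
  shows "dominated S (\<lambda>x y. \<Sum>t<T. \<bar>a t\<bar> * K x y ^ t) (\<lambda>x. \<Sum>t<T. a t * g x ^ t)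
                     (\<Sum>t<T. \<bar>a t\<bar> * C ^ t)"
  by (intro dominated_sum dominated_abs_smult dominated_pow assms) simp

theorem dominated_abs_series:
  assumes \<tau>: "taylor_decomp \<tau>" and g: "dominated S K g C"
  shows "dominated S (\<lambda>x y. abs_series \<tau> (K x y)) (\<lambda>x. \<tau> (g x)) (abs_series \<tau> C)"
proof (rule dominatedI)
  have C: "0 \<le> C" and K: "psd_kernel S K"
    using g by (simp_all add: dominated_nonneg dominated_psd_kernel)
  show "0 \<le> abs_series \<tau> C"
    using abs_series_nonneg[OF \<tau> C] .
  show "psd_kernel S (\<lambda>x y. abs_series \<tau> (K x y))"
    using psd_kernel_abs_series[OF \<tau> K] .
  fix r assume r: "points r \<subseteq> S"
  define a where "a = taylor_coeff \<tau>"
  have partial: "(\<Sum>t<T. pairing (\<lambda>x. a t * g x ^ t) r)\<^sup>2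
      \<le> abs_series \<tau> C * gram (\<lambda>x y. abs_series \<tau> (K x y)) r r" for T
  proof -
    have "(\<Sum>t<T. pairing (\<lambda>x. a t * g x ^ t) r)\<^sup>2
        \<le> (\<Sum>t<T. \<bar>a t\<bar> * C ^ t) * gram (\<lambda>x y. \<Sum>t<T. \<bar>a t\<bar> * K x y ^ t) r r"
      using dominated_pairing_le[OF dominated_abs_partial_sum[OF g] r] by (simp add: pairing_sum)
    also have "\<dots> = (\<Sum>t<T. \<bar>a t\<bar> * C ^ t) * (\<Sum>t<T. \<bar>a t\<bar> * gram (\<lambda>x y. K x y ^ t) r r)"
      by (simp add: gram_sum_kernel gram_cmult_kernel)
    also have "\<dots> \<le> abs_series \<tau> C * gram (\<lambda>x y. abs_series \<tau> (K x y)) r r"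
    proof (rule mult_mono)
      have "0 \<le> gram (\<lambda>x y. K x y ^ t) r r" for t
        using psd_kernel_gram_nonneg[OF psd_kernel_pow[OF K] r] .
      then show "(\<Sum>t<T. \<bar>a t\<bar> * gram (\<lambda>x y. K x y ^ t) r r)
          \<le> gram (\<lambda>x y. abs_series \<tau> (K x y)) r r"
        "0 \<le> (\<Sum>t<T. \<bar>a t\<bar> * gram (\<lambda>x y. K x y ^ t) r r)"
        unfolding a_def by (auto intro: sum_lessThan_le_sums[OF gram_abs_series_sums[OF \<tau>]] sum_nonneg)
      show "(\<Sum>t<T. \<bar>a t\<bar> * C ^ t) \<le> abs_series \<tau> C"
        unfolding a_def using C by (auto intro: sum_lessThan_le_sums[OF abs_series_sums[OF \<tau>]])
      show "0 \<le> abs_series \<tau> C"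
        using abs_series_nonneg[OF \<tau> C] .
    qed
    finally show ?thesis .
  qed
  have "(\<lambda>T. (\<Sum>t<T. pairing (\<lambda>x. a t * g x ^ t) r)\<^sup>2) \<longlonglongrightarrow> (pairing (\<lambda>x. \<tau> (g x)) r)\<^sup>2"
    using pairing_sums[of r "\<lambda>t x. a t * g x ^ t" "\<lambda>x. \<tau> (g x)"] taylor_coeff_sums[OF \<tau>]
    unfolding sums_def a_def by (intro tendsto_power) simp
  then show "(pairing (\<lambda>x. \<tau> (g x)) r)\<^sup>2 \<le> abs_series \<tau> C * gram (\<lambda>x y. abs_series \<tau> (K x y)) r r"
    by (rule LIMSEQ_le_const2) (use partial in auto)
qed

lemma dominated_abs_series_of_term:
  assumes \<tau>: "taylor_decomp \<tau>" and a: "taylor_coeff \<tau> s \<noteq> 0"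
    and L: "psd_kernel S L" and g: "dominated S (\<lambda>x y. L x y ^ s) g C"
  shows "dominated S (\<lambda>x y. abs_series \<tau> (L x y)) g (C / \<bar>taylor_coeff \<tau> s\<bar>)"
  using dominated_mono[OF dominated_scale_kernel[OF g] psd_kernel_abs_series_minus_term[OF \<tau> L]] a
  by simp

section \<open>Dominated functions belong to the RKHS\<close>

definition energy :: "('a \<Rightarrow> 'a \<Rightarrow> real) \<Rightarrow> ('a \<Rightarrow> real) \<Rightarrow> (real \<times> 'a) list \<Rightarrow> real" where
  "energy K g r = gram K r r / 2 - pairing g r"

lemma energy_lower_bound:
  assumes "dominated S K g C" "points r \<subseteq> S"
  shows "- C / 2 \<le> energy K g r"
proof -
  have "pairing g r \<le> sqrt ((pairing g r)\<^sup>2)"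
    by simp
  also have "\<dots> \<le> sqrt (C * gram K r r)"
    using dominated_pairing_le[OF assms] by (rule real_sqrt_le_mono)
  also have "\<dots> \<le> (C + gram K r r) / 2"
    using assms by (intro arith_geo_mean_sqrt dominated_nonneg psd_kernel_gram_nonneg
        dominated_psd_kernel)
  finally show ?thesis
    by (simp add: energy_def)
qed

lemma h0_sqnorm_eq_gram: "h0_sqnorm K r = gram K r r"
  by (simp add: h0_sqnorm_def gram_def split_def)

lemma h0_fun_eq_pairing: "h0_fun K r x = pairing (\<lambda>y. K y x) r"
  by (simp add: h0_fun_def pairing_def split_def)

lemma h0_sqnorm_diff_energy:
  assumes "psd_kernel S K" "points u \<subseteq> S" "points w \<subseteq> S"
  shows "h0_sqnorm K (h0_diff u w)
       = 4 * (energy K g u + energy K g w - 2 * energy K g (scale_comb (1/2) (u @ w)))"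
proof -
  have "gram K w u = gram K u w"
    using psd_kernel_gram_commute assms by blast
  moreover have "h0_diff u w = u @ scale_comb (-1) w"
    by (simp add: h0_diff_def scale_comb_def split_def)
  ultimately show ?thesis
    by (simp add: h0_sqnorm_eq_gram energy_def gram_append_left gram_append_right
        gram_scale_comb_left gram_scale_comb_right pairing_append pairing_scale_comb algebra_simps)
qed

lemma energy_append_point:
  assumes "psd_kernel S K" "points r \<subseteq> S" "x \<in> S"
  shows "energy K g (r @ [(t, x)]) = energy K g r + t * (h0_fun K r x - g x) + t\<^sup>2 * K x x / 2"
proof -
  have "gram K [(t, x)] r = gram K r [(t, x)]"
    using psd_kernel_gram_commute[of S K "[(t, x)]" r] assms by simp
  moreover have "gram K r [(t, x)] = t * h0_fun K r x"
    by (simp add: gram_single_right h0_fun_eq_pairing)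
  moreover have "gram K [(t, x)] [(t, x)] = t\<^sup>2 * K x x" "pairing g [(t, x)] = t * g x"
    by (simp_all add: gram_def pairing_def power2_eq_square)
  ultimately show ?thesis
    by (simp add: energy_def gram_append_left gram_append_right pairing_append algebra_simps)
qed

lemma quadratic_coeff_bound:
  fixes e k \<delta> :: real
  assumes k: "0 \<le> k" and pos: "\<And>t. - \<delta> < t * e + t\<^sup>2 * k / 2"
  shows "\<bar>e\<bar> < (k + 1) * sqrt \<delta>"
proof -
  define s where "s = e / (k + 1)"
  have e: "e = s * (k + 1)"
    using k by (simp add: s_def)
  have "- \<delta> < - s\<^sup>2 * (k + 2) / 2"
    using pos[of "- s"] by (simp add: e power2_eq_square algebra_simps)
  moreover have "s\<^sup>2 \<le> s\<^sup>2 * (k + 2) / 2"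
    using k by (simp add: field_simps)
  ultimately have "\<bar>s\<bar> < sqrt \<delta>"
    by (intro real_less_rsqrt) simp
  then show ?thesis
    using k by (simp add: e abs_mult mult.commute)
qed

lemma near_minimizer_eval:
  assumes K: "psd_kernel S K" and low: "\<And>r'. points r' \<subseteq> S \<Longrightarrow> \<mu> \<le> energy K g r'"
    and r: "points r \<subseteq> S" and near: "energy K g r < \<mu> + \<delta>" and x: "x \<in> S"
  shows "\<bar>h0_fun K r x - g x\<bar> < (K x x + 1) * sqrt \<delta>"
proof (rule quadratic_coeff_bound)
  show "0 \<le> K x x"
    using psd_kernel_diag_nonneg[OF K x] .
  show "- \<delta> < t * (h0_fun K r x - g x) + t\<^sup>2 * K x x / 2" for t
    using low[of "r @ [(t, x)]"] energy_append_point[OF K r x, of g t] near r x by simp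
qed

lemma near_minimizers_close:
  assumes K: "psd_kernel S K" and low: "\<And>r'. points r' \<subseteq> S \<Longrightarrow> \<mu> \<le> energy K g r'"
    and "points u \<subseteq> S" "points w \<subseteq> S" "energy K g u < \<mu> + \<delta>" "energy K g w < \<mu> + \<delta>'"
  shows "h0_sqnorm K (h0_diff u w) < 4 * \<delta> + 4 * \<delta>'"
  using low[of "scale_comb (1/2) (u @ w)"] h0_sqnorm_diff_energy[OF K, of u w g] assms(3-)
  by (simp add: image_Un)

lemma energy_minimizing_sequence:
  assumes g: "dominated S K g C" and \<delta>: "\<And>m. 0 < \<delta> m"
  obtains \<mu> R where "\<And>r. points r \<subseteq> S \<Longrightarrow> \<mu> \<le> energy K g r"
    "\<And>m. points (R m) \<subseteq> S" "\<And>m. energy K g (R m) < \<mu> + \<delta> m"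
proof -
  define E where "E = energy K g ` {r. points r \<subseteq> S}"
  have bdd: "bdd_below E"
    using energy_lower_bound[OF g] unfolding E_def by (intro bdd_belowI2) auto
  have low: "Inf E \<le> energy K g r" if "points r \<subseteq> S" for r
    using cInf_lower[OF _ bdd] that by (simp add: E_def)
  have "E \<noteq> {}"
    by (auto simp: E_def intro: exI[of _ "[]"])
  then have "\<exists>r. points r \<subseteq> S \<and> energy K g r < Inf E + \<delta> m" for m
    using cInf_lessD[of E "Inf E + \<delta> m"] \<delta>[of m] by (auto simp: E_def)
  then obtain R where "\<And>m. points (R m) \<subseteq> S" "\<And>m. energy K g (R m) < Inf E + \<delta> m"
    by metis
  with low show ?thesis
    by (rule that)
qed

text \<open>A minimising sequence of \<open>energy K g\<close> represents \<open>g\<close>: it is Cauchy by the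
  parallelogram identity, and its evaluations converge to \<open>g\<close> by the first-order condition
  in the direction \<open>K(x, -)\<close>.\<close>
theorem dominated_in_rkhs:
  assumes g: "dominated S K g C"
  shows "g \<in> rkhs S K"
proof -
  have K: "psd_kernel S K"
    using g by (rule dominated_psd_kernel)
  define \<delta> :: "nat \<Rightarrow> real" where "\<delta> m = inverse (real (Suc m))" for m
  have \<delta>: "\<delta> \<longlonglongrightarrow> 0"
    unfolding \<delta>_def by (rule LIMSEQ_inverse_real_of_nat)
  have \<delta>_pos: "\<And>m. 0 < \<delta> m"
    by (simp add: \<delta>_def)
  obtain \<mu> R where low: "\<And>r. points r \<subseteq> S \<Longrightarrow> \<mu> \<le> energy K g r"
    and R: "\<And>m. points (R m) \<subseteq> S" "\<And>m. energy K g (R m) < \<mu> + \<delta> m"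
    using energy_minimizing_sequence[where \<delta>=\<delta>, OF g \<delta>_pos] by metis
  have "\<exists>M. \<forall>m\<ge>M. \<forall>m'\<ge>M. h0_sqnorm K (h0_diff (R m) (R m')) < \<epsilon>" if "0 < \<epsilon>" for \<epsilon>
  proof -
    obtain M where M: "\<And>m. M \<le> m \<Longrightarrow> \<delta> m < \<epsilon> / 8"
      using order_tendstoD(2)[OF \<delta>, of "\<epsilon> / 8"] \<open>0 < \<epsilon>\<close> by (auto simp: eventually_sequentially)
    have "h0_sqnorm K (h0_diff (R m) (R m')) < \<epsilon>" if "M \<le> m" "M \<le> m'" for m m'
      using near_minimizers_close[OF K low R(1) R(1) R(2) R(2), of m m'] M[OF that(1)] M[OF that(2)]
      by linarith
    then show ?thesis
      by blast
  qed
  moreover have "(\<lambda>m. h0_fun K (R m) x) \<longlonglongrightarrow> g x" if x: "x \<in> S" for x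
  proof -
    have "\<forall>m. norm (h0_fun K (R m) x - g x) \<le> (K x x + 1) * sqrt (\<delta> m)"
      using near_minimizer_eval[OF K low R(1) R(2) x] by (simp add: less_imp_le)
    moreover have "(\<lambda>m. (K x x + 1) * sqrt (\<delta> m)) \<longlonglongrightarrow> 0"
      using tendsto_mult[OF tendsto_const tendsto_real_sqrt[OF \<delta>]] by simp
    ultimately have "(\<lambda>m. h0_fun K (R m) x - g x) \<longlonglongrightarrow> 0"
      by (rule Lim_null_comparison[OF always_eventually])
    then show ?thesis
      by (simp add: LIM_zero_iff)
  qed
  ultimately show ?thesis
    unfolding rkhs_def using R(1) by blast
qed

section \<open>The convolutional kernel\<close>

definition patch_inner :: "nat \<Rightarrow> nat \<Rightarrow> image \<Rightarrow> image \<Rightarrow> real" where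
  "patch_inner d q X Y = (\<Sum>j<d. X q j * Y q j)"

lemma cnn_kernel_one:
  "cnn_kernel d n 1 \<sigma> = (\<lambda>X Y. \<Sum>i<n. abs_series (\<sigma> 1) (patch_inner d i X Y))"
  by (simp add: fun_eq_iff cnn_kernel_def patch_inner_def)

lemma cnn_kernel_Suc:
  "1 \<le> k \<Longrightarrow> cnn_kernel d n (Suc k) \<sigma> = (\<lambda>X Y. abs_series (\<sigma> (Suc k)) (cnn_kernel d n k \<sigma> X Y))"
  by (simp add: fun_eq_iff cnn_kernel_def)

lemma dominated_patch_inner:
  "dominated S (patch_inner d q) (\<lambda>X. \<Sum>m<d. X q m * w m) (\<Sum>m<d. (w m)\<^sup>2)"
proof -
  have "dominated S (\<lambda>X Y. \<Sum>m<d. X q m * Y q m) (\<lambda>X. \<Sum>m<d. w m * X q m) (\<Sum>m<d. (w m)\<^sup>2 * 1)"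
    by (intro dominated_sum dominated_smult dominated_self_prod) simp
  then show ?thesis
    by (simp add: patch_inner_def[abs_def] mult.commute)
qed

lemma psd_kernel_patch_inner: "psd_kernel S (patch_inner d q)"
  using dominated_patch_inner by (rule dominated_psd_kernel)

lemma psd_kernel_cnn_kernel_one:
  "taylor_decomp (\<sigma> 1) \<Longrightarrow> psd_kernel S (cnn_kernel d n 1 \<sigma>)"
  unfolding cnn_kernel_one by (intro psd_kernel_sum psd_kernel_abs_series psd_kernel_patch_inner)

lemma psd_kernel_cnn_kernel_one_minus_patch:
  assumes "taylor_decomp (\<sigma> 1)" "q < n"
  shows "psd_kernel S (\<lambda>X Y. cnn_kernel d n 1 \<sigma> X Y - abs_series (\<sigma> 1) (patch_inner d q X Y))"
proof -
  have "psd_kernel S (\<lambda>X Y. \<Sum>i\<in>{..<n} - {q}. abs_series (\<sigma> 1) (patch_inner d i X Y))"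
    using assms(1) by (intro psd_kernel_sum psd_kernel_abs_series psd_kernel_patch_inner)
  then show ?thesis
    unfolding cnn_kernel_one using assms(2) by (simp add: sum_diff1)
qed

lemma psd_kernel_cnn_kernel:
  assumes \<sigma>: "\<forall>i\<in>{1..k}. taylor_decomp (\<sigma> i)" and "1 \<le> k"
  shows "psd_kernel S (cnn_kernel d n k \<sigma>)"
  using \<open>1 \<le> k\<close>
proof (induction k rule: dec_induct)
  case base
  have "taylor_decomp (\<sigma> 1)"
    using \<sigma> \<open>1 \<le> k\<close> by simp
  then show ?case
    using psd_kernel_cnn_kernel_one by (simp only: One_nat_def)
next
  case (step m)
  then show ?case
    using \<sigma> by (simp add: cnn_kernel_Suc psd_kernel_abs_series)
qed

section \<open>Networks lie in the RKHS\<close>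

lemma cnn_state_Suc_apply:
  "cnn_state \<sigma> \<gamma> W dd p nn (Suc k) X q l =
   (\<Sum>q'<nn (Suc k). \<gamma> (Suc k) (q + l div p (Suc (Suc k))) q' *
      \<sigma> (Suc k) (\<Sum>m<dd (Suc k) * p (Suc k).
        cnn_state \<sigma> \<gamma> W dd p nn k X q' m * W (Suc k) (l mod p (Suc (Suc k))) m))"
  by (simp add: cnn_layer_def Let_def)

lemma dominable_layer:
  assumes \<tau>: "taylor_decomp \<tau>" and Y: "\<And>q' m. dominable S K (\<lambda>X. Y X q' m)"
  shows "dominable S (\<lambda>X Z. abs_series \<tau> (K X Z))
           (\<lambda>X. \<Sum>q'<nk. c q' * \<tau> (\<Sum>m<M. Y X q' m * w m))"
proof -
  have K: "psd_kernel S K"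
    using Y dominable_psd_kernel by blast
  have "dominable S K (\<lambda>X. w m * Y X q' m)" for q' m
    using dominable_smult[OF Y] .
  then have "dominable S K (\<lambda>X. \<Sum>m<M. Y X q' m * w m)" for q'
    by (intro dominable_sum[OF K]) (simp add: mult.commute)
  then have "dominable S (\<lambda>X Z. abs_series \<tau> (K X Z)) (\<lambda>X. \<tau> (\<Sum>m<M. Y X q' m * w m))" for q'
    using dominated_abs_series[OF \<tau>] unfolding dominable_def by blast
  then show ?thesis
    by (intro dominable_sum dominable_smult psd_kernel_abs_series[OF \<tau> K])
qed

lemma dominable_first_layer_neuron:
  assumes \<sigma>1: "taylor_decomp (\<sigma> 1)" and "q < n"
  shows "dominable S (cnn_kernel d n 1 \<sigma>) (\<lambda>X. \<sigma> 1 (\<Sum>m<d. X q m * w m))"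
  using dominated_mono[OF dominated_abs_series[OF \<sigma>1 dominated_patch_inner]
      psd_kernel_cnn_kernel_one_minus_patch[of \<sigma>, OF assms]]
  unfolding dominable_def by blast

lemma dominable_cnn_state_one:
  assumes \<sigma>1: "taylor_decomp (\<sigma> 1)" and sizes: "dd 1 = d" "p 1 = 1" "nn 1 = n"
  shows "dominable S (cnn_kernel d n 1 \<sigma>) (\<lambda>X. cnn_state \<sigma> \<gamma> W dd p nn 1 X q l)"
proof -
  have "dominable S (cnn_kernel d n 1 \<sigma>) (\<lambda>X. \<Sum>q'<n. c q' * \<sigma> 1 (\<Sum>m<d. X q' m * w m))" for c w
    using \<sigma>1 by (intro dominable_sum dominable_smult dominable_first_layer_neuron
        psd_kernel_cnn_kernel_one) simp_all
  then show ?thesis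
    using cnn_state_Suc_apply[of \<sigma> \<gamma> W dd p nn 0 _ q l] sizes by simp
qed

lemma dominable_cnn_state:
  assumes \<sigma>: "\<forall>i\<in>{1..k}. taylor_decomp (\<sigma> i)" and "1 \<le> k"
    and sizes: "dd 1 = d" "p 1 = 1" "nn 1 = n"
  shows "dominable S (cnn_kernel d n k \<sigma>) (\<lambda>X. cnn_state \<sigma> \<gamma> W dd p nn k X q l)"
  using \<open>1 \<le> k\<close>
proof (induction k arbitrary: q l rule: dec_induct)
  case base
  have "taylor_decomp (\<sigma> 1)"
    using \<sigma> \<open>1 \<le> k\<close> by simp
  from dominable_cnn_state_one[where \<sigma>=\<sigma> and dd=dd and p=p and nn=nn, OF this sizes]
  show ?case
    by (simp only: One_nat_def)
next
  case (step m)
  have "taylor_decomp (\<sigma> (Suc m))"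
    using \<sigma> step.hyps by simp
  then show ?case
    unfolding cnn_state_Suc_apply cnn_kernel_Suc[OF step.hyps(1)]
    by (rule dominable_layer) (rule step.IH)
qed

lemma cnn_net_in_rkhs:
  assumes "\<forall>i\<in>{1..N}. taylor_decomp (\<sigma> i)" "1 \<le> N" "dd 1 = d" "p 1 = 1" "nn 1 = n"
  shows "cnn_net N \<sigma> \<gamma> W Wout dd p nn \<in> rkhs S (cnn_kernel d n N \<sigma>)"
proof -
  have "dominable S (cnn_kernel d n N \<sigma>)
          (\<lambda>X. \<Sum>l<dd (Suc N) * p (Suc N). Wout l * cnn_state \<sigma> \<gamma> W dd p nn N X 0 l)"
    using assms
    by (intro dominable_sum psd_kernel_cnn_kernel dominable_smult dominable_cnn_state)
  then show ?thesis
    by (auto simp: dominable_def cnn_net_def[abs_def] mult.commute intro: dominated_in_rkhs)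
qed

section \<open>Universality\<close>

lemma continuous_on_coordinate: "continuous_on A (\<lambda>X::image. X q j)"
  using continuous_on_product_then_coordinatewise[OF continuous_on_product_coordinates]
  by (rule continuous_on_subset) simp

lemma continuous_on_abs_series: "taylor_decomp \<tau> \<Longrightarrow> continuous_on A (abs_series \<tau>)"
  unfolding abs_series_eq[abs_def]
  by (intro continuous_at_imp_continuous_on ballI isCont_powser_converges_everywhere
      sums_summable[OF abs_series_sums])

lemma continuous_on_cnn_kernel:
  assumes \<sigma>: "\<forall>i\<in>{1..k}. taylor_decomp (\<sigma> i)" and "1 \<le> k"
  shows "continuous_on A (\<lambda>z. cnn_kernel d n k \<sigma> (fst z) (snd z))"
  using \<open>1 \<le> k\<close>
proof (induction k rule: dec_induct)
  case base
  have "continuous_on A (\<lambda>z::image \<times> image. fst z i j)" "continuous_on A (\<lambda>z::image \<times> image. snd z i j)"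
    for i j
    by (rule continuous_on_product_then_coordinatewise[OF continuous_on_product_then_coordinatewise],
        rule continuous_on_fst continuous_on_snd, rule continuous_on_id)+
  then have "continuous_on A (\<lambda>z::image \<times> image. patch_inner d i (fst z) (snd z))" for i
    unfolding patch_inner_def by (intro continuous_on_sum continuous_on_mult)
  then have "continuous_on A
      (\<lambda>z::image \<times> image. \<Sum>i<n. abs_series (\<sigma> 1) (patch_inner d i (fst z) (snd z)))"
    using \<sigma> \<open>1 \<le> k\<close>
    by (intro continuous_on_sum continuous_on_compose2[OF continuous_on_abs_series _ subset_UNIV])
      simp_all
  then show ?case
    by (simp add: cnn_kernel_one[unfolded One_nat_def])
next
  case (step m)
  have "taylor_decomp (\<sigma> (Suc m))"
    using \<sigma> step.hyps by simp
  from continuous_on_compose2[OF continuous_on_abs_series[OF this] step.IH subset_UNIV]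
  show ?case
    by (simp add: cnn_kernel_Suc[OF step.hyps(1)])
qed

lemma compact_sphere_images: "compact (sphere_images d n)"
proof -
  have "compact (PiE UNIV (\<lambda>q::nat. PiE UNIV (\<lambda>j::nat. {-1..1::real})))"
    using compactin_PiE[of "\<lambda>_. euclidean" UNIV "\<lambda>j::nat. {-1..1::real}"]
      compactin_PiE[of "\<lambda>_. euclidean" UNIV "\<lambda>q::nat. PiE UNIV (\<lambda>j::nat. {-1..1::real})"]
    unfolding euclidean_product_topology by simp
  then have box: "compact {X::image. \<forall>q j. X q j \<in> {-1..1}}"
    by (simp add: PiE_UNIV_domain Pi_def)
  have "sphere_images d n = (\<Inter>q\<in>{..<n}. {X. (\<Sum>j<d. (X q j)\<^sup>2) = 1})
      \<inter> (\<Inter>(q, j)\<in>{(q, j). n \<le> q \<or> d \<le> j}. {X. X q j = 0})"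
    by (auto simp: sphere_images_def)
  then have closed: "closed (sphere_images d n)"
    by (auto intro!: closed_Int closed_INT closed_Collect_eq continuous_on_sum continuous_on_power
        continuous_on_coordinate)
  have "sphere_images d n \<subseteq> {X::image. \<forall>q j. X q j \<in> {-1..1}}"
  proof clarify
    fix X :: image and q j assume X: "X \<in> sphere_images d n"
    show "X q j \<in> {-1..1}"
    proof (cases "q < n \<and> j < d")
      case True
      then have "(X q j)\<^sup>2 \<le> (\<Sum>j'<d. (X q j')\<^sup>2)"
        by (intro member_le_sum) auto
      also have "\<dots> = 1"
        using X True by (simp add: sphere_images_def)
      finally show ?thesis
        by (simp add: abs_square_le_1 abs_le_iff)
    next
      case False
      then show ?thesis
        using X by (auto simp: sphere_images_def)
    qed
  qed
  then show ?thesis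
    using compact_Int_closed[OF box closed] by (simp add: Int_absorb1)
qed

lemma dominable_cnn_kernel_one_of_patch_power:
  assumes \<sigma>1: "taylor_decomp (\<sigma> 1)" and a: "taylor_coeff (\<sigma> 1) s \<noteq> 0" and q: "q < n"
    and g: "dominated S (\<lambda>X Y. patch_inner d q X Y ^ s) g C"
  shows "dominable S (cnn_kernel d n 1 \<sigma>) g"
  using dominated_mono[OF dominated_abs_series_of_term[OF \<sigma>1 a psd_kernel_patch_inner g]
      psd_kernel_cnn_kernel_one_minus_patch[of \<sigma>, OF \<sigma>1 q]]
  unfolding dominable_def by blast

lemma dominable_cnn_kernel_one_const:
  assumes "taylor_decomp (\<sigma> 1)" "taylor_coeff (\<sigma> 1) 0 \<noteq> 0" "0 < n"
  shows "dominable S (cnn_kernel d n 1 \<sigma>) (\<lambda>_. 1)"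
proof -
  have "dominated S (\<lambda>X Y. patch_inner d 0 X Y ^ 0) (\<lambda>_. 1) 1"
    using dominated_one by simp
  then show ?thesis
    by (rule dominable_cnn_kernel_one_of_patch_power[of \<sigma>, OF assms])
qed

lemma dominable_cnn_kernel_one_coordinate:
  assumes "taylor_decomp (\<sigma> 1)" "taylor_coeff (\<sigma> 1) 1 \<noteq> 0" "q < n" and j: "j < d"
  shows "dominable S (cnn_kernel d n 1 \<sigma>) (\<lambda>X. X q j)"
proof -
  have "(\<lambda>X. \<Sum>m<d. X q m * (if m = j then 1 else 0)) = (\<lambda>X::image. X q j)"
    using j by (simp add: fun_eq_iff if_distrib[of "\<lambda>x. _ * x"] sum.delta' cong: if_cong)
  then have "dominated S (\<lambda>X Y. patch_inner d q X Y ^ 1) (\<lambda>X. X q j)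
               (\<Sum>m<d. (if m = j then 1 else 0::real)\<^sup>2)"
    using dominated_patch_inner[of S d q "\<lambda>m. if m = j then 1 else 0"] by simp
  then show ?thesis
    by (rule dominable_cnn_kernel_one_of_patch_power[of \<sigma>, OF assms(1-3)])
qed

lemma dominable_pow_add:
  assumes f: "dominable S (\<lambda>x y. K x y ^ s) f" and h: "dominable S (\<lambda>x y. K x y ^ s') h"
    and one: "dominable S K (\<lambda>_. 1)"
  shows "dominable S (\<lambda>x y. K x y ^ (s + s')) (\<lambda>x. f x + h x)"
proof -
  have "dominable S (\<lambda>x y. K x y ^ s * K x y ^ j) (\<lambda>x. g x * 1 ^ j)"
    if "dominable S (\<lambda>x y. K x y ^ s) g" for g s j
    using that one dominated_mult dominated_pow unfolding dominable_def by blast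
  then have "dominable S (\<lambda>x y. K x y ^ (s + s')) f" "dominable S (\<lambda>x y. K x y ^ (s' + s)) h"
    using f h unfolding power_add by simp_all
  then show ?thesis
    by (simp add: add.commute dominable_add)
qed

lemma dominable_pow_mult:
  assumes "dominable S (\<lambda>x y. K x y ^ s) f" "dominable S (\<lambda>x y. K x y ^ s') h"
  shows "dominable S (\<lambda>x y. K x y ^ (s + s')) (\<lambda>x. f x * h x)"
  using assms dominated_mult unfolding dominable_def power_add by blast

lemma cnn_kernel_one_powers_dense:
  assumes \<sigma>1: "taylor_decomp (\<sigma> 1)" "taylor_coeff (\<sigma> 1) 0 \<noteq> 0" "taylor_coeff (\<sigma> 1) 1 \<noteq> 0"
    and n: "0 < n" and g: "continuous_on (sphere_images d n) g" and "0 < \<epsilon>"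
  obtains h s where "dominable (sphere_images d n) (\<lambda>X Y. cnn_kernel d n 1 \<sigma> X Y ^ s) h"
    "\<forall>X\<in>sphere_images d n. \<bar>g X - h X\<bar> < \<epsilon>"
proof -
  define S where "S = sphere_images d n"
  define P where "P f \<longleftrightarrow> continuous_on S f \<and> (\<exists>s. dominable S (\<lambda>X Y. cnn_kernel d n 1 \<sigma> X Y ^ s) f)"
    for f
  have one: "dominable S (cnn_kernel d n 1 \<sigma>) (\<lambda>_. 1)"
    using dominable_cnn_kernel_one_const[of \<sigma>, OF \<sigma>1(1,2) n] .
  have "\<exists>h. P h \<and> (\<forall>X\<in>S. \<bar>g X - h X\<bar> < \<epsilon>)"
  proof (rule Stone_Weierstrass_HOL[of S P g \<epsilon>])
    show "compact S"
      unfolding S_def by (rule compact_sphere_images)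
    show "P (\<lambda>_. c)" for c
    proof -
      have "dominated S (\<lambda>X Y. cnn_kernel d n 1 \<sigma> X Y ^ 0) (\<lambda>_. c) (c\<^sup>2 * 1)"
        using dominated_smult[OF dominated_one, of S c] by simp
      then show ?thesis
        unfolding P_def dominable_def using continuous_on_const by blast
    qed
    show "continuous_on S f" if "P f" for f
      using that by (simp add: P_def)
    show "P (\<lambda>X. f X + h X)" "P (\<lambda>X. f X * h X)" if fh: "P f \<and> P h" for f h
    proof -
      obtain s s' where df: "dominable S (\<lambda>X Y. cnn_kernel d n 1 \<sigma> X Y ^ s) f"
        and dh: "dominable S (\<lambda>X Y. cnn_kernel d n 1 \<sigma> X Y ^ s') h"
        using fh unfolding P_def by blast
      have cf: "continuous_on S f" and ch: "continuous_on S h"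
        using fh unfolding P_def by simp_all
      show "P (\<lambda>X. f X + h X)"
        unfolding P_def using continuous_on_add[OF cf ch] dominable_pow_add[OF df dh one] by blast
      show "P (\<lambda>X. f X * h X)"
        unfolding P_def using continuous_on_mult[OF cf ch] dominable_pow_mult[OF df dh] by blast
    qed
    show "\<exists>f. P f \<and> f X \<noteq> f Y" if XY: "X \<in> S \<and> Y \<in> S \<and> X \<noteq> Y" for X Y
    proof -
      obtain q j where qj: "X q j \<noteq> Y q j"
        using XY by (auto simp: fun_eq_iff)
      then have "q < n" "j < d"
        using XY by (auto simp: S_def sphere_images_def)
      then have "dominable S (\<lambda>X Y. cnn_kernel d n 1 \<sigma> X Y ^ 1) (\<lambda>X. X q j)"
        using dominable_cnn_kernel_one_coordinate[of \<sigma>, OF \<sigma>1(1,3)] by simp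
      then show ?thesis
        using qj continuous_on_coordinate unfolding P_def by blast
    qed
  qed (use g \<open>0 < \<epsilon>\<close> in \<open>simp_all add: S_def\<close>)
  then show ?thesis
    using that unfolding P_def S_def by blast
qed

lemma dominable_cnn_kernel_Suc:
  assumes "taylor_decomp (\<sigma> (Suc k))" "taylor_coeff (\<sigma> (Suc k)) s \<noteq> 0" "1 \<le> k"
    and "psd_kernel S (cnn_kernel d n k \<sigma>)"
    and "dominable S (\<lambda>X Y. cnn_kernel d n k \<sigma> X Y ^ s) g"
  shows "dominable S (cnn_kernel d n (Suc k) \<sigma>) g"
  using assms(5) dominated_abs_series_of_term[OF assms(1,2,4)]
  unfolding dominable_def cnn_kernel_Suc[OF assms(3)] by blast

lemma dominable_cnn_kernel_upper:
  assumes \<sigma>: "\<forall>i\<in>{1..N}. taylor_decomp (\<sigma> i)" and nz: "\<forall>i\<in>{1..N}. taylor_coeff (\<sigma> i) 1 \<noteq> 0"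
    and "1 \<le> k" "k \<le> N" and g: "dominable S (cnn_kernel d n k \<sigma>) g"
  shows "dominable S (cnn_kernel d n N \<sigma>) g"
proof -
  have "j \<le> N \<longrightarrow> dominable S (cnn_kernel d n j \<sigma>) g" if "k \<le> j" for j
    using that
  proof (induction j rule: dec_induct)
    case base
    then show ?case
      using g by simp
  next
    case (step m)
    show ?case
    proof
      assume "Suc m \<le> N"
      then have "dominable S (\<lambda>X Y. cnn_kernel d n m \<sigma> X Y ^ 1) g"
        using step.IH by simp
      moreover have "psd_kernel S (cnn_kernel d n m \<sigma>)"
        using \<open>Suc m \<le> N\<close> \<sigma> \<open>1 \<le> k\<close> step.hyps by (intro psd_kernel_cnn_kernel) auto
      ultimately show "dominable S (cnn_kernel d n (Suc m) \<sigma>) g"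
        using \<open>Suc m \<le> N\<close> \<sigma> nz \<open>1 \<le> k\<close> step.hyps
        by (intro dominable_cnn_kernel_Suc[where s=1]) auto
    qed
  qed
  then show ?thesis
    using \<open>k \<le> N\<close> by blast
qed

theorem c_universal_cnn_kernel:
  assumes \<sigma>: "\<forall>i\<in>{1..N}. taylor_decomp (\<sigma> i)" and nz: "\<forall>i\<in>{1..N}. \<forall>t. taylor_coeff (\<sigma> i) t \<noteq> 0"
    and "2 \<le> N" "0 < n"
  shows "c_universal (sphere_images d n) (cnn_kernel d n N \<sigma>)"
  unfolding c_universal_def
proof (intro conjI allI impI)
  show "continuous_on (sphere_images d n \<times> sphere_images d n) (\<lambda>(X, Y). cnn_kernel d n N \<sigma> X Y)"
    using continuous_on_cnn_kernel[OF \<sigma>] \<open>2 \<le> N\<close> by (simp add: split_def)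
  fix g :: "image \<Rightarrow> real" and \<epsilon> :: real
  assume g: "continuous_on (sphere_images d n) g" and "0 < \<epsilon>"
  have \<sigma>1: "taylor_decomp (\<sigma> 1)" "taylor_coeff (\<sigma> 1) 0 \<noteq> 0" "taylor_coeff (\<sigma> 1) 1 \<noteq> 0"
    using \<sigma> nz \<open>2 \<le> N\<close> by auto
  obtain h s where h: "dominable (sphere_images d n) (\<lambda>X Y. cnn_kernel d n 1 \<sigma> X Y ^ s) h"
    and approx: "\<forall>X\<in>sphere_images d n. \<bar>g X - h X\<bar> < \<epsilon>"
    by (rule cnn_kernel_one_powers_dense[of \<sigma>, OF \<sigma>1 \<open>0 < n\<close> g \<open>0 < \<epsilon>\<close>])
  have \<sigma>2: "taylor_decomp (\<sigma> (Suc 1))" "taylor_coeff (\<sigma> (Suc 1)) s \<noteq> 0"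
    using \<sigma> nz \<open>2 \<le> N\<close> by auto
  have "dominable (sphere_images d n) (cnn_kernel d n (Suc 1) \<sigma>) h"
    by (rule dominable_cnn_kernel_Suc[OF \<sigma>2 order_refl psd_kernel_cnn_kernel_one[of \<sigma>, OF \<sigma>1(1)] h])
  moreover have "\<forall>i\<in>{1..N}. taylor_coeff (\<sigma> i) 1 \<noteq> 0"
    using nz by blast
  ultimately have "dominable (sphere_images d n) (cnn_kernel d n N \<sigma>) h"
    using \<open>2 \<le> N\<close> by (intro dominable_cnn_kernel_upper[OF \<sigma>]) simp_all
  then show "\<exists>h\<in>rkhs (sphere_images d n) (cnn_kernel d n N \<sigma>). \<forall>X\<in>sphere_images d n. \<bar>g X - h X\<bar> < \<epsilon>"
    using approx dominated_in_rkhs unfolding dominable_def by blast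
qed

theorem mainTheorem1:
  fixes d n N :: nat and \<sigma> :: "nat \<Rightarrow> real \<Rightarrow> real"
  assumes "2 \<le> d" and "1 \<le> n" and "2 \<le> N"
    and "\<forall>i\<in>{1..N}. taylor_decomp (\<sigma> i)"
  shows "psd_kernel (sphere_images d n) (cnn_kernel d n N \<sigma>)
       \<and> (\<forall>dd nn \<gamma>. cnn_sizes_ok d n N dd nn \<longrightarrow>
            cnn_family N \<sigma> dd nn \<gamma> \<subseteq> rkhs (sphere_images d n) (cnn_kernel d n N \<sigma>))
       \<and> ((\<forall>i\<in>{1..N}. \<forall>t. (deriv ^^ t) (\<sigma> i) 0 \<noteq> 0) \<longrightarrow>
            c_universal (sphere_images d n) (cnn_kernel d n N \<sigma>))"
proof (intro conjI allI impI subsetI)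
  show "psd_kernel (sphere_images d n) (cnn_kernel d n N \<sigma>)"
    using assms(3,4) by (intro psd_kernel_cnn_kernel) simp_all
  show "f \<in> rkhs (sphere_images d n) (cnn_kernel d n N \<sigma>)"
    if "cnn_sizes_ok d n N dd nn" "f \<in> cnn_family N \<sigma> dd nn \<gamma>" for dd nn \<gamma> f
    using that assms(3,4) by (auto simp: cnn_family_def cnn_sizes_ok_def intro!: cnn_net_in_rkhs)
  show "c_universal (sphere_images d n) (cnn_kernel d n N \<sigma>)"
    if "\<forall>i\<in>{1..N}. \<forall>t. (deriv ^^ t) (\<sigma> i) 0 \<noteq> 0"
    using that assms(2-4) by (intro c_universal_cnn_kernel) (simp_all add: taylor_coeff_def)
qed

end
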